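(* Let $\mathcal{G}=(G,<,+,0,\ldots)$ be an o-minimal expansion of an ordered abelian group, let $X\subseteq G^{m+n}$ be definable, let $\mathcal{D}$ be a cell decomposition of $G^{m+n}$ partitioning $X$ (i.e. $X$ is a union of cells of $\mathcal{D}$), and let $\pi:G^{m+n}\to G^m$ be the projection onto the first $m$ coordinates. Assume that no cell involved is exceptional. Then for every cell $A\in\pi(\mathcal{D})$ there is an integer $e_A$ such that $\chi_b(X\cap\pi^{-1}(a))=e_A$ for all $a\in A$, and $\chi_b(X\cap\pi^{-1}(A))=\chi_b(A)\,e_A$.
   Context: Cells and cell decompositions are in the sense of o-minimal structures; $\pi(\mathcal{D})=\{\pi(C)\mid C\in\mathcal{D}\}$ is the induced cell decomposition of $G^m$. For $k\le N$ let $p_k:G^N\to G^k$ be the projection onto the first $k$ coordinates. A cell $C\subseteq G^N$ is exceptional if there exist $k$ and a cell $A\subseteq G^{k-1}$ with $p_k(C)=A\times G$. A non-exceptional cell $C$ is bad if there exist $k$, a cell $A\subseteq G^{k-1}$ and a definable $f:A\to G$ with $p_k(C)=\{(x,t)\in A\times G\mid t<f(x)\}$ or $\{(x,t)\in A\times G\mid f(x)<t\}$. A cell is good if it is neither exceptional nor bad. For a definable $Z\subseteq G^N$, $\chi_b(Z)$ is defined by choosing a finite partition $\mathcal{F}$ of $Z$ into non-exceptional cells and setting $\chi_b(Z)=\sum_{C\in\mathcal{F},\,C\text{ good}}(-1)^{\dim C}$ (which is $0$ if there is no good cell); this is independent of the choice of $\mathcal{F}$. *)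

theory Defs
  imports Main
begin

text \<open>Points of G^n are lists of length n. A (first-order, with parameters) structure on G
  is given by the families Def n of definable subsets of G^n.\<close>

definition Gpow :: "nat \<Rightarrow> 'g list set" where
  "Gpow n = {xs. length xs = n}"

definition omin_group_expansion :: "(nat \<Rightarrow> ('g::linordered_ab_group_add) list set set) \<Rightarrow> bool" where
  "omin_group_expansion Def \<longleftrightarrow>
     \<comment> \<open>dense linear order without endpoints\<close>
     (\<forall>x y::'g. x < y \<longrightarrow> (\<exists>z. x < z \<and> z < y)) \<and>
     (\<forall>x::'g. \<exists>y z. y < x \<and> x < z) \<and>
     \<comment> \<open>structure axioms (van den Dries)\<close>
     (\<forall>n. \<forall>A\<in>Def n. A \<subseteq> Gpow n) \<and>
     (\<forall>n. Gpow n \<in> Def n) \<and>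
     (\<forall>n. \<forall>A\<in>Def n. \<forall>B\<in>Def n. A \<union> B \<in> Def n) \<and>
     (\<forall>n. \<forall>A\<in>Def n. Gpow n - A \<in> Def n) \<and>
     (\<forall>n. \<forall>A\<in>Def n. {xs @ [t] | xs t. xs \<in> A} \<in> Def (Suc n)) \<and>
     (\<forall>n. \<forall>A\<in>Def n. {t # xs | xs t. xs \<in> A} \<in> Def (Suc n)) \<and>
     (\<forall>n i j. i < n \<longrightarrow> j < n \<longrightarrow> {xs \<in> Gpow n. xs ! i = xs ! j} \<in> Def n) \<and>
     (\<forall>n. \<forall>A\<in>Def (Suc n). butlast ` A \<in> Def n) \<and>
     \<comment> \<open>parameters, order and group operation are definable\<close>
     (\<forall>a. {[a]} \<in> Def 1) \<and>
     {[x, y] | x y. x < y} \<in> Def 2 \<and>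
     {[x, y, z] | x y z. z = x + y} \<in> Def 3 \<and>
     \<comment> \<open>o-minimality: definable subsets of G are finite unions of points and open intervals
         (endpoints in G \<union> {-\<infinity>,+\<infinity>}, encoded by None)\<close>
     (\<forall>S\<in>Def 1. \<exists>I. finite I \<and> (\<Union>I) = {x. [x] \<in> S} \<and>
        (\<forall>U\<in>I. (\<exists>a. U = {a}) \<or>
          (\<exists>lo hi. U = {x. (\<forall>a\<in>set_option lo. a < x) \<and> (\<forall>b\<in>set_option hi. x < b)})))"

definition def_fun :: "(nat \<Rightarrow> 'g list set set) \<Rightarrow> nat \<Rightarrow> 'g list set \<Rightarrow> ('g list \<Rightarrow> 'g) \<Rightarrow> bool" where
  "def_fun Def n A f \<longleftrightarrow> {xs @ [f xs] | xs. xs \<in> A} \<in> Def (Suc n)"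

text \<open>Continuity on A w.r.t. the (product of the) order topology; for an ordered group the
  order topology is the one generated by symmetric intervals.\<close>
definition cont_on_G :: "nat \<Rightarrow> ('g::linordered_ab_group_add) list set \<Rightarrow> ('g list \<Rightarrow> 'g) \<Rightarrow> bool" where
  "cont_on_G n A f \<longleftrightarrow> (\<forall>a\<in>A. \<forall>e>0. \<exists>d>0. \<forall>y\<in>A.
       (\<forall>i<n. - d < y ! i - a ! i \<and> y ! i - a ! i < d) \<longrightarrow> - e < f y - f a \<and> f y - f a < e)"

text \<open>Cells: cellD Def n d C means C \<subseteq> G^n is a cell of dimension d.  Bands have lower/upper
  boundaries that are continuous definable functions or -\<infinity>/+\<infinity> (None).\<close>
inductive cellD :: "(nat \<Rightarrow> ('g::linordered_ab_group_add) list set set) \<Rightarrow> nat \<Rightarrow> nat \<Rightarrow> 'g list set \<Rightarrow> bool"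
  for Def where
  base: "cellD Def 0 0 {[]}"
| graph: "cellD Def n d C \<Longrightarrow> def_fun Def n C f \<Longrightarrow> cont_on_G n C f \<Longrightarrow>
      cellD Def (Suc n) d {xs @ [f xs] | xs. xs \<in> C}"
| band: "cellD Def n d C \<Longrightarrow>
      (\<forall>f\<in>set_option lo. def_fun Def n C f \<and> cont_on_G n C f) \<Longrightarrow>
      (\<forall>g\<in>set_option hi. def_fun Def n C g \<and> cont_on_G n C g) \<Longrightarrow>
      (\<forall>f\<in>set_option lo. \<forall>g\<in>set_option hi. \<forall>xs\<in>C. f xs < g xs) \<Longrightarrow>
      cellD Def (Suc n) (Suc d)
        {xs @ [t] | xs t. xs \<in> C \<and> (\<forall>f\<in>set_option lo. f xs < t) \<and> (\<forall>g\<in>set_option hi. t < g xs)}"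

definition is_cell :: "(nat \<Rightarrow> ('g::linordered_ab_group_add) list set set) \<Rightarrow> nat \<Rightarrow> 'g list set \<Rightarrow> bool" where
  "is_cell Def n C \<longleftrightarrow> (\<exists>d. cellD Def n d C)"

definition cell_dim :: "(nat \<Rightarrow> ('g::linordered_ab_group_add) list set set) \<Rightarrow> nat \<Rightarrow> 'g list set \<Rightarrow> nat" where
  "cell_dim Def n C = (THE d. cellD Def n d C)"

definition proj :: "nat \<Rightarrow> 'g list set \<Rightarrow> 'g list set" where
  "proj k C = take k ` C"

definition exceptional :: "(nat \<Rightarrow> ('g::linordered_ab_group_add) list set set) \<Rightarrow> nat \<Rightarrow> 'g list set \<Rightarrow> bool" where
  "exceptional Def N C \<longleftrightarrow> (\<exists>k. 1 \<le> k \<and> k \<le> N \<and> (\<exists>A. is_cell Def (k - 1) A \<and>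
      proj k C = {xs @ [t] | xs t. xs \<in> A}))"

definition bad :: "(nat \<Rightarrow> ('g::linordered_ab_group_add) list set set) \<Rightarrow> nat \<Rightarrow> 'g list set \<Rightarrow> bool" where
  "bad Def N C \<longleftrightarrow> \<not> exceptional Def N C \<and>
    (\<exists>k. 1 \<le> k \<and> k \<le> N \<and> (\<exists>A f. is_cell Def (k - 1) A \<and> def_fun Def (k - 1) A f \<and>
      (proj k C = {xs @ [t] | xs t. xs \<in> A \<and> t < f xs} \<or>
       proj k C = {xs @ [t] | xs t. xs \<in> A \<and> f xs < t})))"

definition good :: "(nat \<Rightarrow> ('g::linordered_ab_group_add) list set set) \<Rightarrow> nat \<Rightarrow> 'g list set \<Rightarrow> bool" where
  "good Def N C \<longleftrightarrow> \<not> exceptional Def N C \<and> \<not> bad Def N C"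

definition nonexc_partition :: "(nat \<Rightarrow> ('g::linordered_ab_group_add) list set set) \<Rightarrow> nat \<Rightarrow> 'g list set \<Rightarrow> 'g list set set \<Rightarrow> bool" where
  "nonexc_partition Def N Z F \<longleftrightarrow> finite F \<and> \<Union>F = Z \<and>
     (\<forall>C\<in>F. \<forall>C'\<in>F. C \<noteq> C' \<longrightarrow> C \<inter> C' = {}) \<and>
     (\<forall>C\<in>F. is_cell Def N C \<and> \<not> exceptional Def N C)"

text \<open>chi_b, computed from some partition into non-exceptional cells (the paper states that
  the value does not depend on the choice).\<close>
definition chi_b :: "(nat \<Rightarrow> ('g::linordered_ab_group_add) list set set) \<Rightarrow> nat \<Rightarrow> 'g list set \<Rightarrow> int" where
  "chi_b Def N Z = (let F = (SOME F. nonexc_partition Def N Z F) in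
     (\<Sum>C\<in>{C\<in>F. good Def N C}. (-1) ^ cell_dim Def N C))"

fun cell_decomp :: "(nat \<Rightarrow> ('g::linordered_ab_group_add) list set set) \<Rightarrow> nat \<Rightarrow> 'g list set set \<Rightarrow> bool" where
  "cell_decomp Def 0 D \<longleftrightarrow> D = {{[]}}"
| "cell_decomp Def (Suc n) D \<longleftrightarrow> finite D \<and> \<Union>D = Gpow (Suc n) \<and>
     (\<forall>C\<in>D. \<forall>C'\<in>D. C \<noteq> C' \<longrightarrow> C \<inter> C' = {}) \<and>
     (\<forall>C\<in>D. is_cell Def (Suc n) C) \<and>
     cell_decomp Def n (proj n ` D)"

end

theory Submission
  imports Defs
begin

(* A non-exceptional cell C of G^(k+1) is a graph or a band over a non-exceptional cell B of
   G^k, and its weight (-1)^(dim C) if C is good, 0 otherwise, is the weight of B times 1 for a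
   graph, -1 for a band bounded on both sides and 0 for a half-bounded band.  The fibre of C over
   a point a of its projection to G^m is built from the point {a} by the same sequence of graphs
   and bands, so its weight is the product of the same factors: it does not depend on a, and the
   weight of C is the weight of the projection times it.  Summing over the cells of D above A gives
   the theorem, once chi_b is known to be the weight sum of every partition into non-exceptional
   cells.  That holds because weights respect linear relations between indicator functions: on a
   line the weight of a point or an interval is a linear function of its indicator (its jumps at
   finitely many points plus its value near +infinity), and induction on the dimension lifts this
   to cells. *)

section \<open>Graphs and bands\<close>

abbreviation graph_over :: "('g list \<Rightarrow> 'g) \<Rightarrow> 'g list set \<Rightarrow> 'g list set" where
  "graph_over f B \<equiv> {xs @ [f xs] | xs. xs \<in> B}"

abbreviation between :: "('g list \<Rightarrow> 'g::order) option \<Rightarrow> ('g list \<Rightarrow> 'g) option \<Rightarrow> 'g list \<Rightarrow> 'g \<Rightarrow> bool" where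
  "between lo hi xs t \<equiv> (\<forall>f\<in>set_option lo. f xs < t) \<and> (\<forall>g\<in>set_option hi. t < g xs)"

abbreviation band_over ::
  "('g list \<Rightarrow> 'g::order) option \<Rightarrow> ('g list \<Rightarrow> 'g) option \<Rightarrow> 'g list set \<Rightarrow> 'g list set" where
  "band_over lo hi B \<equiv> {xs @ [t] | xs t. xs \<in> B \<and> between lo hi xs t}"

abbreviation bounds_ordered :: "('g list \<Rightarrow> 'g::order) option \<Rightarrow> ('g list \<Rightarrow> 'g) option \<Rightarrow> 'g list set \<Rightarrow> bool" where
  "bounds_ordered lo hi B \<equiv> \<forall>f\<in>set_option lo. \<forall>g\<in>set_option hi. \<forall>xs\<in>B. f xs < g xs"

lemma cellD_subset_Gpow: "cellD Def n d C \<Longrightarrow> C \<subseteq> Gpow n"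
  by (induction rule: cellD.induct) (auto simp: Gpow_def)

lemma cellD_0D: "cellD Def 0 d C \<Longrightarrow> C = {[]} \<and> d = 0"
  by (erule cellD.cases) auto

lemma cellD_SucE:
  assumes "cellD Def (Suc n) d C"
  obtains (graph) B f where "cellD Def n d B" "def_fun Def n B f" "cont_on_G n B f" "C = graph_over f B"
  | (band) dB B lo hi where "cellD Def n dB B" "d = Suc dB"
      "\<forall>f\<in>set_option lo. def_fun Def n B f \<and> cont_on_G n B f"
      "\<forall>g\<in>set_option hi. def_fun Def n B g \<and> cont_on_G n B g"
      "bounds_ordered lo hi B" "C = band_over lo hi B"
  using assms by (cases rule: cellD.cases) auto

lemma proj_eq_self: "C \<subseteq> Gpow n \<Longrightarrow> proj n C = C"
  unfolding proj_def Gpow_def by (force simp: subset_iff image_iff)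

lemma proj_proj: "k \<le> n \<Longrightarrow> proj k (proj n C) = proj k C"
  by (auto simp: proj_def image_image min_def)

lemma proj_graph_over: "B \<subseteq> Gpow n \<Longrightarrow> proj n (graph_over f B) = B"
  unfolding proj_def Gpow_def by (force simp: subset_iff image_iff)

lemma length_proj: "C \<subseteq> Gpow n \<Longrightarrow> m \<le> n \<Longrightarrow> a \<in> proj m C \<Longrightarrow> length a = m"
  by (auto simp: proj_def Gpow_def)

lemma snoc_in_proj: "C \<subseteq> Gpow (Suc n) \<Longrightarrow> x @ [t] \<in> C \<Longrightarrow> x \<in> proj n C"
  unfolding proj_def Gpow_def by (force simp: subset_iff)

lemma graph_over_subset_Gpow: "B \<subseteq> Gpow n \<Longrightarrow> graph_over f B \<subseteq> Gpow (Suc n)"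
  by (auto simp: Gpow_def)

lemma band_over_subset_Gpow: "B \<subseteq> Gpow n \<Longrightarrow> band_over lo hi B \<subseteq> Gpow (Suc n)"
  by (auto simp: Gpow_def)

definition exceptional_at :: "(nat \<Rightarrow> ('g::linordered_ab_group_add) list set set) \<Rightarrow> nat \<Rightarrow> 'g list set \<Rightarrow> bool" where
  "exceptional_at Def k C \<longleftrightarrow> (\<exists>A. is_cell Def (k - 1) A \<and> proj k C = {xs @ [t] | xs t. xs \<in> A})"

definition bad_at :: "(nat \<Rightarrow> ('g::linordered_ab_group_add) list set set) \<Rightarrow> nat \<Rightarrow> 'g list set \<Rightarrow> bool" where
  "bad_at Def k C \<longleftrightarrow> (\<exists>A f. is_cell Def (k - 1) A \<and> def_fun Def (k - 1) A f \<and>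
      (proj k C = {xs @ [t] | xs t. xs \<in> A \<and> t < f xs} \<or>
       proj k C = {xs @ [t] | xs t. xs \<in> A \<and> f xs < t}))"

lemma exceptional_iff_at: "exceptional Def N C \<longleftrightarrow> (\<exists>k. 1 \<le> k \<and> k \<le> N \<and> exceptional_at Def k C)"
  by (simp add: exceptional_def exceptional_at_def)

lemma good_iff_at: "good Def N C \<longleftrightarrow> \<not> exceptional Def N C \<and> \<not> (\<exists>k. 1 \<le> k \<and> k \<le> N \<and> bad_at Def k C)"
  by (auto simp: good_def bad_def bad_at_def)

lemma exceptional_at_proj: "k \<le> n \<Longrightarrow> exceptional_at Def k (proj n C) = exceptional_at Def k C"
  by (simp add: exceptional_at_def proj_proj)

lemma bad_at_proj: "k \<le> n \<Longrightarrow> bad_at Def k (proj n C) = bad_at Def k C"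
  by (simp add: bad_at_def proj_proj)

lemma ex_le_Suc_iff: "(\<exists>k\<ge>1. k \<le> Suc N \<and> P k) \<longleftrightarrow> (\<exists>k\<ge>1. k \<le> N \<and> P k) \<or> P (Suc N)"
  by (auto simp: le_Suc_eq)

lemma exceptional_Suc:
  "exceptional Def (Suc N) C \<longleftrightarrow> exceptional Def N (proj N C) \<or> exceptional_at Def (Suc N) C"
  unfolding exceptional_iff_at ex_le_Suc_iff by (auto simp: exceptional_at_proj)

lemma good_Suc:
  "good Def (Suc N) C \<longleftrightarrow>
     good Def N (proj N C) \<and> \<not> exceptional_at Def (Suc N) C \<and> \<not> bad_at Def (Suc N) C"
  unfolding good_iff_at exceptional_Suc ex_le_Suc_iff by (auto simp: bad_at_proj)

lemma exceptional_at_Suc_fibre: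
  assumes "exceptional_at Def (Suc n) S" "S \<subseteq> Gpow (Suc n)" "x @ [t] \<in> S"
  shows "x @ [t'] \<in> S"
  using assms unfolding exceptional_at_def by (auto simp: proj_eq_self)

lemma bad_at_Suc_fibre:
  assumes "bad_at Def (Suc n) S" "S \<subseteq> Gpow (Suc n)" "x @ [t] \<in> S"
  shows "(\<forall>t'<t. x @ [t'] \<in> S) \<or> (\<forall>t'>t. x @ [t'] \<in> S)"
  using assms unfolding bad_at_def by (auto simp: proj_eq_self dest: order.strict_trans)

section \<open>Weights of cells\<close>

definition cell_weight :: "(nat \<Rightarrow> ('g::linordered_ab_group_add) list set set) \<Rightarrow> nat \<Rightarrow> 'g list set \<Rightarrow> int" where
  "cell_weight Def N C = (if good Def N C then (-1) ^ cell_dim Def N C else 0)"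

fun band_weight :: "'a option \<Rightarrow> 'b option \<Rightarrow> int" where
  "band_weight (Some _) (Some _) = -1"
| "band_weight None None = 1"
| "band_weight _ _ = 0"

locale dense_unbounded_order =
  fixes Def :: "nat \<Rightarrow> ('g::linordered_ab_group_add) list set set"
  assumes dense: "\<And>x y::'g. x < y \<Longrightarrow> \<exists>z. x < z \<and> z < y"
    and unbounded: "\<And>x::'g. \<exists>y z. y < x \<and> x < z"
begin

lemma interval_nonempty:
  assumes "\<forall>a\<in>set_option l. \<forall>b\<in>set_option h. a < (b::'g)"
  shows "\<exists>t. (\<forall>a\<in>set_option l. a < t) \<and> (\<forall>b\<in>set_option h. t < b)"
proof (cases l)
  case None
  show ?thesis
  proof (cases h)
    case None
    then show ?thesis using \<open>l = None\<close> by simp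
  next
    case (Some b)
    then show ?thesis using \<open>l = None\<close> unbounded[of b] by auto
  qed
next
  case (Some a)
  show ?thesis
  proof (cases h)
    case None
    then show ?thesis using \<open>l = Some a\<close> unbounded[of a] by auto
  next
    case (Some b)
    then show ?thesis using \<open>l = Some a\<close> assms dense[of a b] by auto
  qed
qed

lemma interval_two_points:
  assumes "\<forall>a\<in>set_option l. \<forall>b\<in>set_option h. a < (b::'g)"
  shows "\<exists>t1 t2. t1 < t2 \<and> (\<forall>a\<in>set_option l. a < t1) \<and> (\<forall>b\<in>set_option h. t2 < b)"
proof -
  obtain t1 where t1: "\<forall>a\<in>set_option l. a < t1" "\<forall>b\<in>set_option h. t1 < b"
    using interval_nonempty[OF assms] by blast
  then obtain t2 where "t1 < t2" "\<forall>b\<in>set_option h. t2 < b"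
    using interval_nonempty[of "Some t1" h] by auto
  with t1 show ?thesis by blast
qed

lemma between_nonempty:
  fixes lo hi :: "('g list \<Rightarrow> 'g) option"
  assumes "bounds_ordered lo hi B" "x \<in> B"
  shows "\<exists>t. between lo hi x t"
  using interval_nonempty[of "map_option (\<lambda>f. f x) lo" "map_option (\<lambda>g. g x) hi"] assms
  by (cases lo; cases hi) auto

lemma between_two_points:
  fixes lo hi :: "('g list \<Rightarrow> 'g) option"
  assumes "bounds_ordered lo hi B" "x \<in> B"
  shows "\<exists>t1 t2. t1 < t2 \<and> between lo hi x t1 \<and> between lo hi x t2"
proof -
  obtain t1 t2 where "t1 < t2" "\<forall>f\<in>set_option lo. f x < t1" "\<forall>g\<in>set_option hi. t2 < g x"
    using interval_two_points[of "map_option (\<lambda>f. f x) lo" "map_option (\<lambda>g. g x) hi"] assms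
    by (cases lo; cases hi) auto
  then show ?thesis by (intro exI[of _ t1] exI[of _ t2]) (auto dest: order.strict_trans)
qed

lemma cellD_nonempty: "cellD Def n d C \<Longrightarrow> C \<noteq> {}"
proof (induction rule: cellD.induct)
  case (band n d C lo hi)
  then obtain x where x: "x \<in> C" by blast
  then obtain t where "between lo hi x t" using between_nonempty[OF band.hyps(4)] by blast
  then have "x @ [t] \<in> band_over lo hi C" using x by blast
  then show ?case by blast
qed auto

lemma proj_band_over:
  fixes lo hi :: "('g list \<Rightarrow> 'g) option"
  assumes "B \<subseteq> Gpow n" "bounds_ordered lo hi B"
  shows "proj n (band_over lo hi B) = B"
proof
  show "proj n (band_over lo hi B) \<subseteq> B"
    using assms(1) unfolding proj_def Gpow_def by (force simp: subset_iff)
  show "B \<subseteq> proj n (band_over lo hi B)"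
  proof
    fix x assume x: "x \<in> B"
    then obtain t where "between lo hi x t" using between_nonempty[OF assms(2)] by blast
    moreover have "x = take n (x @ [t])" using x assms(1) by (auto simp: Gpow_def)
    ultimately show "x \<in> proj n (band_over lo hi B)" unfolding proj_def using x by blast
  qed
qed

lemma is_cell_proj_Suc: "cellD Def (Suc n) d C \<Longrightarrow> is_cell Def n (proj n C)"
  by (erule cellD_SucE) (auto simp: is_cell_def proj_graph_over proj_band_over cellD_subset_Gpow)

lemma graph_over_neq_band_over:
  fixes lo hi :: "('g list \<Rightarrow> 'g) option"
  assumes "B' \<noteq> {}" "bounds_ordered lo hi B'"
  shows "graph_over f B \<noteq> band_over lo hi B'"
proof
  assume eq: "graph_over f B = band_over lo hi B'"
  obtain x where x: "x \<in> B'" using assms(1) by auto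
  obtain t1 t2 where t: "t1 < t2" "between lo hi x t1" "between lo hi x t2"
    using between_two_points[OF assms(2) x] by blast
  then have "x @ [t1] \<in> band_over lo hi B'" "x @ [t2] \<in> band_over lo hi B'"
    using x by auto
  then have "t1 = f x" "t2 = f x" using eq by auto
  with t(1) show False by simp
qed

lemma cellD_dim_unique: "cellD Def n d C \<Longrightarrow> cellD Def n d' C \<Longrightarrow> d = d'"
proof (induction arbitrary: d' rule: cellD.induct)
  case base
  then show ?case using cellD_0D by blast
next
  case (graph n d C f)
  from graph.prems show ?case
  proof (cases rule: cellD_SucE)
    case (graph B f')
    have "C = B"
      using proj_graph_over[OF cellD_subset_Gpow[OF graph.hyps(1)], of f]
        proj_graph_over[OF cellD_subset_Gpow[OF graph(1)], of f'] graph(4) by simp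
    then show ?thesis using graph.IH graph(1) by simp
  next
    case (band dB B lo hi)
    then show ?thesis using graph_over_neq_band_over[OF cellD_nonempty[OF band(1)] band(5), of f C] by simp
  qed
next
  case (band n d C lo hi)
  from band.prems show ?case
  proof (cases rule: cellD_SucE)
    case (graph B f)
    then show ?thesis using graph_over_neq_band_over[OF cellD_nonempty[OF band.hyps(1)] band.hyps(4), of f B] by simp
  next
    case (band dB B lo' hi')
    have "C = B"
      using proj_band_over[OF cellD_subset_Gpow[OF band.hyps(1)] band.hyps(4)]
        proj_band_over[OF cellD_subset_Gpow[OF band(1)] band(5)] band(6) by simp
    then show ?thesis using band.IH band(1,2) by simp
  qed
qed

lemma cell_dim_eq: "cellD Def n d C \<Longrightarrow> cell_dim Def n C = d"
  unfolding cell_dim_def using cellD_dim_unique by blast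

lemma cell_weight_Nil: "cell_weight Def 0 {[]} = 1"
  using cell_dim_eq[OF cellD.base] by (simp add: cell_weight_def good_iff_at exceptional_iff_at)

lemma graph_over_not_exceptional_at:
  assumes "cellD Def n d B"
  shows "\<not> exceptional_at Def (Suc n) (graph_over f B)"
proof
  assume exc: "exceptional_at Def (Suc n) (graph_over f B)"
  obtain x where x: "x \<in> B" using cellD_nonempty[OF assms] by blast
  obtain z where "f x < z" using unbounded by blast
  moreover have "x @ [z] \<in> graph_over f B"
    using exceptional_at_Suc_fibre[OF exc graph_over_subset_Gpow[OF cellD_subset_Gpow[OF assms]]] x
    by blast
  ultimately show False by auto
qed

lemma graph_over_not_bad_at:
  assumes "cellD Def n d B"
  shows "\<not> bad_at Def (Suc n) (graph_over f B)"
proof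
  assume bad: "bad_at Def (Suc n) (graph_over f B)"
  obtain x where x: "x \<in> B" using cellD_nonempty[OF assms] by blast
  obtain y z where yz: "y < f x" "f x < z" using unbounded by blast
  have "x @ [y] \<in> graph_over f B \<or> x @ [z] \<in> graph_over f B"
    using bad_at_Suc_fibre[OF bad graph_over_subset_Gpow[OF cellD_subset_Gpow[OF assms]], of x "f x"] x yz
    by blast
  with yz show False by auto
qed

lemma band_over_exceptional_at_iff:
  fixes lo hi :: "('g list \<Rightarrow> 'g) option"
  assumes B: "cellD Def n d B" and ordered: "bounds_ordered lo hi B"
  shows "exceptional_at Def (Suc n) (band_over lo hi B) \<longleftrightarrow> lo = None \<and> hi = None"
proof
  assume exc: "exceptional_at Def (Suc n) (band_over lo hi B)"
  obtain x where x: "x \<in> B" using cellD_nonempty[OF B] by blast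
  then obtain t where "between lo hi x t" using between_nonempty[OF ordered] by blast
  with x have "x @ [t] \<in> band_over lo hi B" by blast
  then have "x @ [t'] \<in> band_over lo hi B" for t'
    using exceptional_at_Suc_fibre[OF exc band_over_subset_Gpow[OF cellD_subset_Gpow[OF B]]] by blast
  from this[of "the lo x"] this[of "the hi x"] show "lo = None \<and> hi = None"
    by (cases lo; cases hi) auto
next
  assume "lo = None \<and> hi = None"
  moreover have "proj (Suc n) (band_over lo hi B) = band_over lo hi B"
    by (rule proj_eq_self[OF band_over_subset_Gpow[OF cellD_subset_Gpow[OF B]]])
  ultimately have "proj (Suc n) (band_over lo hi B) = {xs @ [t] | xs t. xs \<in> B}"
    by simp
  then show "exceptional_at Def (Suc n) (band_over lo hi B)"
    using B unfolding exceptional_at_def is_cell_def by auto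
qed

lemma band_over_not_bad_at:
  fixes lo hi :: "('g list \<Rightarrow> 'g) option"
  assumes B: "cellD Def n d B" and ordered: "bounds_ordered lo hi B" and "lo \<noteq> None" "hi \<noteq> None"
  shows "\<not> bad_at Def (Suc n) (band_over lo hi B)"
proof
  assume bad: "bad_at Def (Suc n) (band_over lo hi B)"
  obtain f g where fg: "lo = Some f" "hi = Some g" using assms(3,4) by blast
  obtain x where x: "x \<in> B" using cellD_nonempty[OF B] by blast
  then obtain t where t: "between lo hi x t" using between_nonempty[OF ordered] by blast
  with x have "x @ [t] \<in> band_over lo hi B" by blast
  then have "(\<forall>t'<t. x @ [t'] \<in> band_over lo hi B) \<or> (\<forall>t'>t. x @ [t'] \<in> band_over lo hi B)"
    using bad_at_Suc_fibre[OF bad band_over_subset_Gpow[OF cellD_subset_Gpow[OF B]]] by blast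
  moreover have "f x < t" "t < g x" using t fg by auto
  ultimately have "x @ [f x] \<in> band_over lo hi B \<or> x @ [g x] \<in> band_over lo hi B"
    by blast
  then show False using fg by auto
qed

lemma band_over_bad_at:
  fixes lo hi :: "('g list \<Rightarrow> 'g) option"
  assumes B: "cellD Def n d B"
    and lo: "\<forall>f\<in>set_option lo. def_fun Def n B f \<and> cont_on_G n B f"
    and hi: "\<forall>g\<in>set_option hi. def_fun Def n B g \<and> cont_on_G n B g"
    and half_bounded: "(lo = None) \<noteq> (hi = None)"
  shows "bad_at Def (Suc n) (band_over lo hi B)"
proof -
  have proj: "proj (Suc n) (band_over lo hi B) = band_over lo hi B"
    by (rule proj_eq_self[OF band_over_subset_Gpow[OF cellD_subset_Gpow[OF B]]])
  consider g where "lo = None" "hi = Some g" | f where "lo = Some f" "hi = None"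
    using half_bounded by (cases lo; cases hi) auto
  then show ?thesis
  proof cases
    case (1 g)
    with proj have "proj (Suc n) (band_over lo hi B) = {xs @ [t] | xs t. xs \<in> B \<and> t < g xs}"
      by simp
    then show ?thesis unfolding bad_at_def is_cell_def
      using B hi 1 by (intro exI[of _ B] exI[of _ g]) auto
  next
    case (2 f)
    with proj have "proj (Suc n) (band_over lo hi B) = {xs @ [t] | xs t. xs \<in> B \<and> f xs < t}"
      by simp
    then show ?thesis unfolding bad_at_def is_cell_def
      using B lo 2 by (intro exI[of _ B] exI[of _ f]) auto
  qed
qed

lemma exceptional_graph_over:
  "cellD Def n d B \<Longrightarrow> exceptional Def (Suc n) (graph_over f B) \<longleftrightarrow> exceptional Def n B"
  by (simp add: exceptional_Suc graph_over_not_exceptional_at proj_graph_over cellD_subset_Gpow)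

lemma cell_weight_graph_over:
  assumes "cellD Def n d B" "def_fun Def n B f" "cont_on_G n B f"
  shows "cell_weight Def (Suc n) (graph_over f B) = cell_weight Def n B"
  using assms graph_over_not_exceptional_at graph_over_not_bad_at cell_dim_eq[OF cellD.graph[OF assms]]
  by (simp add: cell_weight_def good_Suc proj_graph_over cellD_subset_Gpow cell_dim_eq)

lemma exceptional_band_over:
  fixes lo hi :: "('g list \<Rightarrow> 'g) option"
  assumes "cellD Def n d B" "bounds_ordered lo hi B"
  shows "exceptional Def (Suc n) (band_over lo hi B) \<longleftrightarrow> exceptional Def n B \<or> (lo = None \<and> hi = None)"
  using assms
  by (simp add: exceptional_Suc band_over_exceptional_at_iff proj_band_over cellD_subset_Gpow)

lemma cell_weight_band_over:
  fixes lo hi :: "('g list \<Rightarrow> 'g) option"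
  assumes B: "cellD Def n d B"
    and lo: "\<forall>f\<in>set_option lo. def_fun Def n B f \<and> cont_on_G n B f"
    and hi: "\<forall>g\<in>set_option hi. def_fun Def n B g \<and> cont_on_G n B g"
    and ordered: "bounds_ordered lo hi B" and bounded: "\<not> (lo = None \<and> hi = None)"
  shows "cell_weight Def (Suc n) (band_over lo hi B) = cell_weight Def n B * band_weight lo hi"
proof -
  have "good Def (Suc n) (band_over lo hi B) \<longleftrightarrow> good Def n B \<and> lo \<noteq> None \<and> hi \<noteq> None"
  proof (cases "lo \<noteq> None \<and> hi \<noteq> None")
    case True
    then show ?thesis
      using band_over_not_bad_at[OF B ordered] band_over_exceptional_at_iff[OF B ordered]
      by (simp add: good_Suc proj_band_over[OF cellD_subset_Gpow[OF B] ordered])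
  next
    case False
    then show ?thesis using band_over_bad_at[OF B lo hi] bounded by (auto simp: good_Suc)
  qed
  moreover have "cell_dim Def (Suc n) (band_over lo hi B) = Suc d"
    using cell_dim_eq[OF cellD.band[OF B lo hi ordered]] .
  ultimately show ?thesis
    using bounded by (cases lo; cases hi) (auto simp: cell_weight_def cell_dim_eq[OF B])
qed

end

section \<open>Independence of chi_b from the partition\<close>

datatype 'g piece = Point 'g | Interval "'g option" "'g option"

fun in_piece :: "'g::linorder piece \<Rightarrow> 'g \<Rightarrow> bool" where
  "in_piece (Point a) t \<longleftrightarrow> t = a"
| "in_piece (Interval l h) t \<longleftrightarrow> (\<forall>a\<in>set_option l. a < t) \<and> (\<forall>b\<in>set_option h. t < b)"

(* Membership of all points immediately to the right of t, resp. of all large enough points. *)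
fun in_piece_right :: "'g::linorder piece \<Rightarrow> 'g \<Rightarrow> bool" where
  "in_piece_right (Point a) t \<longleftrightarrow> False"
| "in_piece_right (Interval l h) t \<longleftrightarrow> (\<forall>a\<in>set_option l. a \<le> t) \<and> (\<forall>b\<in>set_option h. t < b)"

fun in_piece_top :: "'g::linorder piece \<Rightarrow> bool" where
  "in_piece_top (Point a) \<longleftrightarrow> False"
| "in_piece_top (Interval l h) \<longleftrightarrow> h = None"

fun piece_ends :: "'g piece \<Rightarrow> 'g set" where
  "piece_ends (Point a) = {a}"
| "piece_ends (Interval l h) = set_option l \<union> set_option h"

fun wf_piece :: "'g::linorder piece \<Rightarrow> bool" where
  "wf_piece (Point a) \<longleftrightarrow> True"
| "wf_piece (Interval l h) \<longleftrightarrow> (\<forall>a\<in>set_option l. \<forall>b\<in>set_option h. a < b)"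

fun piece_weight :: "'g piece \<Rightarrow> int" where
  "piece_weight (Point a) = 1"
| "piece_weight (Interval l h) = band_weight l h"

lemma finite_piece_ends: "finite (piece_ends s)"
  by (cases s) auto

lemma piece_weight_eq_jumps:
  assumes "wf_piece s" "finite P" "piece_ends s \<subseteq> P"
  shows "piece_weight s =
    (\<Sum>p\<in>P. of_bool (in_piece s p) - of_bool (in_piece_right s p)) + of_bool (in_piece_top s)"
proof (cases s)
  case (Point a)
  then have "(\<Sum>p\<in>P. of_bool (in_piece s p) - of_bool (in_piece_right s p)) = (\<Sum>p\<in>P. if p = a then 1 else (0::int))"
    by (intro sum.cong) auto
  also have "\<dots> = 1" using assms Point by (simp add: sum.delta)
  finally show ?thesis using Point by simp
next
  case (Interval l h)
  show ?thesis
  proof (cases l)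
    case None
    have "(\<Sum>p\<in>P. of_bool (in_piece s p) - of_bool (in_piece_right s p)) = (0::int)"
      using Interval None by (intro sum.neutral) auto
    then show ?thesis using Interval None by (cases h) simp_all
  next
    case (Some a)
    have "(\<Sum>p\<in>P. of_bool (in_piece s p) - of_bool (in_piece_right s p)) = (\<Sum>p\<in>P. if p = a then -1 else (0::int))"
      using assms(1) Interval Some by (intro sum.cong) (auto simp: less_le)
    also have "\<dots> = -1" using assms Interval Some by (simp add: sum.delta)
    finally show ?thesis using Interval Some by (cases h) simp_all
  qed
qed

lemma in_piece_eq_in_piece_right:
  assumes ends: "piece_ends s \<subseteq> P" and "p < t" and gap: "\<forall>q\<in>P. p < q \<longrightarrow> t < q"
  shows "in_piece s t \<longleftrightarrow> in_piece_right s p"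
proof -
  have "q < t \<longleftrightarrow> q \<le> p" "t < q \<longleftrightarrow> p < q" if "q \<in> P" for q
    using assms(2) gap that by (metis not_le order.strict_trans1 less_asym)+
  then show ?thesis using ends \<open>p < t\<close> by (cases s; auto simp: subset_iff split: option.splits)
qed

lemma in_piece_eq_in_piece_top:
  assumes ends: "piece_ends s \<subseteq> P" and above: "\<forall>q\<in>P. q < t"
  shows "in_piece s t \<longleftrightarrow> in_piece_top s"
proof -
  have "\<not> t < q" "q < t" if "q \<in> P" for q using above that by (auto dest: less_asym)
  then show ?thesis using ends by (cases s; auto simp: subset_iff split: option.splits)
qed

context dense_unbounded_order
begin

lemma exists_gap_right:
  assumes "finite (P::'g set)"
  shows "\<exists>t>p. \<forall>q\<in>P. p < q \<longrightarrow> t < q"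
proof (cases "{q\<in>P. p < q} = {}")
  case True
  then show ?thesis using unbounded[of p] by auto
next
  case False
  define m where "m = Min {q\<in>P. p < q}"
  have "m \<in> {q\<in>P. p < q}" "\<forall>q\<in>P. p < q \<longrightarrow> m \<le> q"
    using Min_in[OF _ False] Min_le assms unfolding m_def by auto
  moreover obtain t where "p < t" "t < m" using dense calculation(1) by blast
  ultimately show ?thesis by (meson order.strict_trans2)
qed

lemma exists_above:
  assumes "finite (P::'g set)"
  shows "\<exists>t. \<forall>q\<in>P. q < t"
proof (cases "P = {}")
  case False
  obtain t where "Max P < t" using unbounded by blast
  then show ?thesis using Max_ge[OF assms] by (meson le_less_trans)
qed simp

lemma piece_weight_combination_eq_0:
  fixes s :: "'i \<Rightarrow> 'g piece" and c :: "'i \<Rightarrow> int"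
  assumes I: "finite I" and wf: "\<And>i. i \<in> I \<Longrightarrow> wf_piece (s i)"
    and zero: "\<And>t. (\<Sum>i\<in>I. c i * of_bool (in_piece (s i) t)) = 0"
  shows "(\<Sum>i\<in>I. c i * piece_weight (s i)) = 0"
proof -
  define P where "P = (\<Union>i\<in>I. piece_ends (s i))"
  have P: "finite P" unfolding P_def using I finite_piece_ends by blast
  have ends: "piece_ends (s i) \<subseteq> P" if "i \<in> I" for i unfolding P_def using that by blast
  have right: "(\<Sum>i\<in>I. c i * of_bool (in_piece_right (s i) p)) = 0" for p
  proof -
    obtain t where "p < t" "\<forall>q\<in>P. p < q \<longrightarrow> t < q" using exists_gap_right[OF P] by blast
    then have "(\<Sum>i\<in>I. c i * of_bool (in_piece_right (s i) p)) = (\<Sum>i\<in>I. c i * of_bool (in_piece (s i) t))"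
      using in_piece_eq_in_piece_right[OF ends] by (intro sum.cong) auto
    with zero show ?thesis by simp
  qed
  have top: "(\<Sum>i\<in>I. c i * of_bool (in_piece_top (s i))) = 0"
  proof -
    obtain t where "\<forall>q\<in>P. q < t" using exists_above[OF P] by blast
    then have "(\<Sum>i\<in>I. c i * of_bool (in_piece_top (s i))) = (\<Sum>i\<in>I. c i * of_bool (in_piece (s i) t))"
      using in_piece_eq_in_piece_top[OF ends] by (intro sum.cong) auto
    with zero show ?thesis by simp
  qed
  have "(\<Sum>i\<in>I. c i * piece_weight (s i)) = (\<Sum>i\<in>I. c i *
      ((\<Sum>p\<in>P. of_bool (in_piece (s i) p) - of_bool (in_piece_right (s i) p)) + of_bool (in_piece_top (s i))))"
    using piece_weight_eq_jumps[OF wf P ends] by (intro sum.cong) auto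
  also have "\<dots> = (\<Sum>p\<in>P. \<Sum>i\<in>I. c i * of_bool (in_piece (s i) p))
      - (\<Sum>p\<in>P. \<Sum>i\<in>I. c i * of_bool (in_piece_right (s i) p))
      + (\<Sum>i\<in>I. c i * of_bool (in_piece_top (s i)))"
    by (simp add: algebra_simps sum.distrib sum_subtractf sum_distrib_left sum.swap[of _ P I])
  also have "\<dots> = 0" using zero right top by simp
  finally show ?thesis .
qed

lemma cell_Suc_pieces:
  assumes "cellD Def (Suc n) d C" "\<not> exceptional Def (Suc n) C"
  shows "\<exists>w. cell_weight Def (Suc n) C = cell_weight Def n (proj n C) * w \<and>
    (\<forall>x\<in>proj n C. \<exists>s. wf_piece s \<and> piece_weight s = w \<and> (\<forall>t. x @ [t] \<in> C \<longleftrightarrow> in_piece s t))"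
  using assms(1)
proof (cases rule: cellD_SucE)
  case (graph B f)
  then have "proj n C = B" by (simp add: proj_graph_over cellD_subset_Gpow)
  with graph show ?thesis
    by (intro exI[of _ 1]) (auto simp: cell_weight_graph_over intro!: exI[of _ "Point (f _)"])
next
  case (band dB B lo hi)
  then have B: "proj n C = B" by (simp add: proj_band_over cellD_subset_Gpow)
  have bounded: "\<not> (lo = None \<and> hi = None)"
    using assms(2) exceptional_band_over[OF band(1,5)] band(6) by simp
  have "piece_weight (Interval (map_option (\<lambda>f. f x) lo) (map_option (\<lambda>g. g x) hi)) = band_weight lo hi" for x
    by (cases lo; cases hi) simp_all
  with band B bounded show ?thesis
    by (intro exI[of _ "band_weight lo hi"])
      (auto simp: cell_weight_band_over
        intro!: exI[of _ "Interval (map_option (\<lambda>f. f _) lo) (map_option (\<lambda>g. g _) hi)"])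
qed

lemma pieces_combination_over_base:
  fixes C :: "'i \<Rightarrow> 'g list set" and c w :: "'i \<Rightarrow> int"
  assumes I: "finite I" and C: "\<And>i. i \<in> I \<Longrightarrow> C i \<subseteq> Gpow (Suc n)"
    and pieces: "\<And>i y. i \<in> I \<Longrightarrow> y \<in> proj n (C i) \<Longrightarrow>
      \<exists>s. wf_piece s \<and> piece_weight s = w i \<and> (\<forall>t. y @ [t] \<in> C i \<longleftrightarrow> in_piece s t)"
    and zero: "\<And>y. (\<Sum>i\<in>I. c i * of_bool (y \<in> C i)) = 0"
  shows "(\<Sum>i\<in>I. (c i * w i) * of_bool (x \<in> proj n (C i))) = 0"
proof -
  let ?J = "{i\<in>I. x \<in> proj n (C i)}"
  have "\<exists>s. \<forall>i\<in>?J. wf_piece (s i) \<and> piece_weight (s i) = w i \<and> (\<forall>t. x @ [t] \<in> C i \<longleftrightarrow> in_piece (s i) t)"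
    using pieces by (intro bchoice) auto
  then obtain s where s: "\<forall>i\<in>?J. wf_piece (s i) \<and> piece_weight (s i) = w i \<and> (\<forall>t. x @ [t] \<in> C i \<longleftrightarrow> in_piece (s i) t)"
    by blast
  have "x @ [t] \<notin> C i" if "i \<in> I" "x \<notin> proj n (C i)" for i t
    using snoc_in_proj[OF C] that by blast
  then have "(\<Sum>i\<in>?J. c i * of_bool (in_piece (s i) t)) = (\<Sum>i\<in>I. c i * of_bool (x @ [t] \<in> C i))" for t
    unfolding sum.inter_filter[OF I] using s by (intro sum.cong) auto
  then have "(\<Sum>i\<in>?J. c i * piece_weight (s i)) = 0"
    using piece_weight_combination_eq_0[of ?J s c] I s zero by simp
  moreover have "(\<Sum>i\<in>?J. c i * piece_weight (s i)) = (\<Sum>i\<in>?J. c i * w i)"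
    using s by (intro sum.cong) auto
  moreover have "(\<Sum>i\<in>?J. c i * w i) = (\<Sum>i\<in>I. (c i * w i) * of_bool (x \<in> proj n (C i)))"
    unfolding sum.inter_filter[OF I] by (intro sum.cong) auto
  ultimately show ?thesis by simp
qed

lemma cell_weight_combination_eq_0:
  fixes C :: "'i \<Rightarrow> 'g list set" and c :: "'i \<Rightarrow> int"
  assumes "finite I"
  shows "(\<And>i. i \<in> I \<Longrightarrow> is_cell Def n (C i) \<and> \<not> exceptional Def n (C i)) \<Longrightarrow>
    (\<And>x. (\<Sum>i\<in>I. c i * of_bool (x \<in> C i)) = 0) \<Longrightarrow>
    (\<Sum>i\<in>I. c i * cell_weight Def n (C i)) = 0"
proof (induction n arbitrary: C c)
  case 0
  then have "C i = {[]}" if "i \<in> I" for i using cellD_0D that unfolding is_cell_def by blast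
  then have "(\<Sum>i\<in>I. c i * cell_weight Def 0 (C i)) = (\<Sum>i\<in>I. c i * of_bool ([] \<in> C i))"
    by (intro sum.cong) (auto simp: cell_weight_Nil)
  with "0.prems"(2) show ?case by simp
next
  case (Suc n)
  let ?B = "\<lambda>i. proj n (C i)"
  obtain d where d: "\<And>i. i \<in> I \<Longrightarrow> cellD Def (Suc n) (d i) (C i)"
    using Suc.prems(1) unfolding is_cell_def by metis
  have nexc: "\<And>i. i \<in> I \<Longrightarrow> \<not> exceptional Def (Suc n) (C i)" using Suc.prems(1) by blast
  obtain w where w: "\<forall>i\<in>I. cell_weight Def (Suc n) (C i) = cell_weight Def n (?B i) * w i \<and>
    (\<forall>x\<in>?B i. \<exists>s. wf_piece s \<and> piece_weight s = w i \<and> (\<forall>t. x @ [t] \<in> C i \<longleftrightarrow> in_piece s t))"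
    using bchoice[of I] cell_Suc_pieces[OF d nexc] by metis
  have "C i \<subseteq> Gpow (Suc n)" if "i \<in> I" for i using cellD_subset_Gpow[OF d[OF that]] .
  then have "(\<Sum>i\<in>I. (c i * w i) * of_bool (x \<in> ?B i)) = 0" for x
    by (rule pieces_combination_over_base[OF assms]) (use w Suc.prems(2) in auto)
  moreover have "is_cell Def n (?B i) \<and> \<not> exceptional Def n (?B i)" if "i \<in> I" for i
    using is_cell_proj_Suc[OF d] nexc exceptional_Suc that by blast
  ultimately have "(\<Sum>i\<in>I. (c i * w i) * cell_weight Def n (?B i)) = 0"
    using Suc.IH[of ?B "\<lambda>i. c i * w i"] by blast
  moreover have "(\<Sum>i\<in>I. c i * cell_weight Def (Suc n) (C i)) = (\<Sum>i\<in>I. (c i * w i) * cell_weight Def n (?B i))"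
    using w by (intro sum.cong) auto
  ultimately show ?case by simp
qed

lemma nonexc_partition_finite: "nonexc_partition Def n Z F \<Longrightarrow> finite F"
  unfolding nonexc_partition_def by simp

lemma nonexc_partition_indicator_sum:
  assumes "nonexc_partition Def n Z F"
  shows "(\<Sum>C\<in>F. of_bool (x \<in> C)) = (of_bool (x \<in> Z) :: int)"
proof (cases "x \<in> Z")
  case True
  then obtain C0 where C0: "C0 \<in> F" "x \<in> C0" using assms unfolding nonexc_partition_def by auto
  have "(\<Sum>C\<in>F. of_bool (x \<in> C)) = (\<Sum>C\<in>F. if C = C0 then 1 else (0::int))"
    using assms C0 unfolding nonexc_partition_def by (intro sum.cong) auto
  also have "\<dots> = 1" using C0 assms unfolding nonexc_partition_def by simp
  finally show ?thesis using True by simp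
next
  case False
  then show ?thesis using assms unfolding nonexc_partition_def by (intro trans[OF sum.neutral]) auto
qed

lemma nonexc_partition_weight_sum_eq:
  assumes F1: "nonexc_partition Def n Z F1" and F2: "nonexc_partition Def n Z F2"
  shows "(\<Sum>C\<in>F1. cell_weight Def n C) = (\<Sum>C\<in>F2. cell_weight Def n C)"
proof -
  have fin: "finite F1" "finite F2" using F1 F2 by (simp_all add: nonexc_partition_finite)
  let ?C = "case_sum id id :: 'g list set + 'g list set \<Rightarrow> 'g list set"
  let ?c = "case_sum (\<lambda>_. 1) (\<lambda>_. -1) :: 'g list set + 'g list set \<Rightarrow> int"
  have "(\<Sum>i\<in>F1 <+> F2. ?c i * cell_weight Def n (?C i)) = 0"
  proof (rule cell_weight_combination_eq_0)
    show "finite (F1 <+> F2)" using fin by simp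
    show "is_cell Def n (?C i) \<and> \<not> exceptional Def n (?C i)" if "i \<in> F1 <+> F2" for i
      using F1 F2 that unfolding nonexc_partition_def by auto
    show "(\<Sum>i\<in>F1 <+> F2. ?c i * of_bool (x \<in> ?C i)) = 0" for x
      using nonexc_partition_indicator_sum[OF F1, of x] nonexc_partition_indicator_sum[OF F2, of x] fin
      by (simp add: sum.Plus comp_def sum_negf del: sum_of_bool_eq sum_mult_of_bool_eq)
  qed
  then show ?thesis using fin by (simp add: sum.Plus comp_def sum_negf)
qed

lemma chi_b_eq_weight_sum:
  assumes "nonexc_partition Def n Z F"
  shows "chi_b Def n Z = (\<Sum>C\<in>F. cell_weight Def n C)"
proof -
  let ?F = "SOME F. nonexc_partition Def n Z F"
  have F: "nonexc_partition Def n Z ?F" using someI[of "nonexc_partition Def n Z", OF assms] .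
  have "chi_b Def n Z = (\<Sum>C\<in>?F. cell_weight Def n C)"
    unfolding chi_b_def Let_def cell_weight_def sum.inter_filter[OF nonexc_partition_finite[OF F]] ..
  also have "\<dots> = (\<Sum>C\<in>F. cell_weight Def n C)" using nonexc_partition_weight_sum_eq[OF F assms] .
  finally show ?thesis .
qed

lemma chi_b_cell: "is_cell Def n A \<Longrightarrow> \<not> exceptional Def n A \<Longrightarrow> chi_b Def n A = cell_weight Def n A"
  using chi_b_eq_weight_sum[of n A "{A}"] by (simp add: nonexc_partition_def)

end

section \<open>Fibres\<close>

definition fibre :: "'g list \<Rightarrow> nat \<Rightarrow> 'g list set \<Rightarrow> 'g list set" where
  "fibre a m C = {xs \<in> C. take m xs = a}"

lemma fibre_subset: "fibre a m C \<subseteq> C"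
  by (auto simp: fibre_def)

lemma fibre_graph_over: "B \<subseteq> Gpow n \<Longrightarrow> m \<le> n \<Longrightarrow> fibre a m (graph_over f B) = graph_over f (fibre a m B)"
  unfolding fibre_def Gpow_def by (auto simp: subset_iff)

lemma fibre_band_over: "B \<subseteq> Gpow n \<Longrightarrow> m \<le> n \<Longrightarrow> fibre a m (band_over lo hi B) = band_over lo hi (fibre a m B)"
  unfolding fibre_def Gpow_def by (auto simp: subset_iff)

lemma cont_on_G_subset: "cont_on_G n A f \<Longrightarrow> A' \<subseteq> A \<Longrightarrow> cont_on_G n A' f"
  unfolding cont_on_G_def by (meson subsetD)

definition has_fibre_weight ::
  "(nat \<Rightarrow> ('g::linordered_ab_group_add) list set set) \<Rightarrow> nat \<Rightarrow> nat \<Rightarrow> 'g list set \<Rightarrow> int \<Rightarrow> bool" where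
  "has_fibre_weight Def m n C w \<longleftrightarrow>
     (\<forall>a\<in>proj m C. is_cell Def n (fibre a m C) \<and> \<not> exceptional Def n (fibre a m C) \<and>
        cell_weight Def n (fibre a m C) = w) \<and>
     cell_weight Def n C = cell_weight Def m (proj m C) * w"

context dense_unbounded_order
begin

lemma nonexc_partition_fibres:
  assumes F: "nonexc_partition Def n Z F"
    and fibres: "\<And>C. C \<in> F \<Longrightarrow> is_cell Def n (fibre a m C) \<and> \<not> exceptional Def n (fibre a m C)"
  shows "nonexc_partition Def n (fibre a m Z) (fibre a m ` F)" "inj_on (fibre a m) F"
proof -
  have disjoint: "\<forall>C\<in>F. \<forall>C'\<in>F. C \<noteq> C' \<longrightarrow> C \<inter> C' = {}" and Z: "\<Union>F = Z"
    using F unfolding nonexc_partition_def by auto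
  then show "nonexc_partition Def n (fibre a m Z) (fibre a m ` F)"
    using nonexc_partition_finite[OF F] fibres unfolding nonexc_partition_def fibre_def by blast
  show "inj_on (fibre a m) F"
  proof (rule inj_onI)
    fix C C' assume C: "C \<in> F" "C' \<in> F" and eq: "fibre a m C = fibre a m C'"
    have "fibre a m C \<noteq> {}" using fibres[OF C(1)] cellD_nonempty unfolding is_cell_def by blast
    with eq disjoint C show "C = C'" unfolding fibre_def by blast
  qed
qed

lemma chi_b_fibre:
  assumes "nonexc_partition Def n Z F"
    and "\<And>C. C \<in> F \<Longrightarrow> is_cell Def n (fibre a m C) \<and> \<not> exceptional Def n (fibre a m C)"
  shows "chi_b Def n (fibre a m Z) = (\<Sum>C\<in>F. cell_weight Def n (fibre a m C))"
  using chi_b_eq_weight_sum[OF nonexc_partition_fibres(1)[OF assms]]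
    sum.reindex[OF nonexc_partition_fibres(2)[OF assms]] by simp

lemma chi_b_over_cell:
  assumes part: "nonexc_partition Def n Z F" and over: "\<And>C. C \<in> F \<Longrightarrow> proj m C = A"
    and w: "\<And>C. C \<in> F \<Longrightarrow> has_fibre_weight Def m n C (w C)"
    and A: "is_cell Def m A" "\<not> exceptional Def m A"
  shows "\<forall>a\<in>A. chi_b Def n (fibre a m Z) = (\<Sum>C\<in>F. w C)"
    and "chi_b Def n Z = chi_b Def m A * (\<Sum>C\<in>F. w C)"
proof -
  show "\<forall>a\<in>A. chi_b Def n (fibre a m Z) = (\<Sum>C\<in>F. w C)"
  proof
    fix a assume "a \<in> A"
    then have fibres: "\<And>C. C \<in> F \<Longrightarrow> is_cell Def n (fibre a m C) \<and> \<not> exceptional Def n (fibre a m C) \<and>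
        cell_weight Def n (fibre a m C) = w C"
      using w over unfolding has_fibre_weight_def by blast
    then have "chi_b Def n (fibre a m Z) = (\<Sum>C\<in>F. cell_weight Def n (fibre a m C))"
      by (intro chi_b_fibre[OF part]) blast
    also have "\<dots> = (\<Sum>C\<in>F. w C)" using fibres by (intro sum.cong) auto
    finally show "chi_b Def n (fibre a m Z) = (\<Sum>C\<in>F. w C)" .
  qed
  have "chi_b Def n Z = (\<Sum>C\<in>F. cell_weight Def m A * w C)"
    unfolding chi_b_eq_weight_sum[OF part]
    using w over unfolding has_fibre_weight_def by (intro sum.cong) auto
  then show "chi_b Def n Z = chi_b Def m A * (\<Sum>C\<in>F. w C)"
    by (simp add: chi_b_cell[OF A] sum_distrib_left)
qed

end

locale omin_structure =
  fixes Def :: "nat \<Rightarrow> ('g::linordered_ab_group_add) list set set"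
  assumes omin: "omin_group_expansion Def"
begin

lemma omin_axioms:
  "\<forall>x y::'g. x < y \<longrightarrow> (\<exists>z. x < z \<and> z < y)"
  "\<forall>x::'g. \<exists>y z. y < x \<and> x < z"
  "\<forall>n. \<forall>A\<in>Def n. A \<subseteq> Gpow n" "\<forall>n. Gpow n \<in> Def n"
  "\<forall>n. \<forall>A\<in>Def n. \<forall>B\<in>Def n. A \<union> B \<in> Def n" "\<forall>n. \<forall>A\<in>Def n. Gpow n - A \<in> Def n"
  "\<forall>n. \<forall>A\<in>Def n. {xs @ [t] | xs t. xs \<in> A} \<in> Def (Suc n)"
  "\<forall>n. \<forall>A\<in>Def n. {t # xs | xs t. xs \<in> A} \<in> Def (Suc n)"
  "\<forall>a. {[a]} \<in> Def 1"
  using omin unfolding omin_group_expansion_def by auto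

end

sublocale omin_structure \<subseteq> dense_unbounded_order
  using omin_axioms(1,2) by unfold_locales blast+

context omin_structure
begin

lemma Def_subset_Gpow: "A \<in> Def n \<Longrightarrow> A \<subseteq> Gpow n"
  using omin_axioms(3) by blast

lemma Gpow_in_Def: "Gpow n \<in> Def n"
  using omin_axioms(4) by blast

lemma Def_Int:
  assumes "A \<in> Def n" "B \<in> Def n"
  shows "A \<inter> B \<in> Def n"
proof -
  have "A \<inter> B = Gpow n - ((Gpow n - A) \<union> (Gpow n - B))" using Def_subset_Gpow[OF assms(1)] by blast
  then show ?thesis using assms omin_axioms(5,6) by simp
qed

lemma Def_snoc: "A \<in> Def n \<Longrightarrow> {xs @ [t] | xs t. xs \<in> A} \<in> Def (Suc n)"
  using omin_axioms(7) by blast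

lemma Def_cons: "A \<in> Def n \<Longrightarrow> {t # xs | xs t. xs \<in> A} \<in> Def (Suc n)"
  using omin_axioms(8) by blast

lemma last_eq_in_Def: "{zs @ [t] | zs. length zs = j} \<in> Def (Suc j)"
proof (induction j)
  case 0
  then show ?case using omin_axioms(9) by simp
next
  case (Suc j)
  have "{zs @ [t] | zs. length zs = Suc j} = {x # xs | xs x. xs \<in> {zs @ [t] | zs. length zs = j}}"
    by (auto simp: length_Suc_conv)
  with Def_cons[OF Suc.IH] show ?case by simp
qed

lemma singleton_in_Def: "{a} \<in> Def (length a)"
proof (induction a rule: rev_induct)
  case Nil
  have "{[]} = (Gpow 0 :: 'g list set)" by (auto simp: Gpow_def)
  then show ?case using Gpow_in_Def[of 0] by simp
next
  case (snoc t a)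
  have "{a @ [t]} = {xs @ [s] | xs s. xs \<in> {a}} \<inter> {zs @ [t] | zs. length zs = length a}" by auto
  then show ?case using Def_Int[OF Def_snoc[OF snoc.IH] last_eq_in_Def] by simp
qed

lemma fibre_Gpow_in_Def: "length a = m \<Longrightarrow> fibre a m (Gpow (m + j)) \<in> Def (m + j)"
proof (induction j)
  case 0
  then have "fibre a m (Gpow (m + 0)) = {a}" by (auto simp: fibre_def Gpow_def)
  then show ?case using singleton_in_Def[of a] 0 by simp
next
  case (Suc j)
  have "fibre a m (Gpow (m + Suc j)) = {xs @ [t] | xs t. xs \<in> fibre a m (Gpow (m + j))}"
  proof (intro set_eqI iffI)
    fix x assume "x \<in> fibre a m (Gpow (m + Suc j))"
    then have x: "length x = Suc (m + j)" "take m x = a" by (auto simp: fibre_def Gpow_def)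
    then have "x = butlast x @ [last x]" by (cases x rule: rev_cases) auto
    moreover have "butlast x \<in> fibre a m (Gpow (m + j))"
      using x by (auto simp: fibre_def Gpow_def take_butlast)
    ultimately show "x \<in> {xs @ [t] | xs t. xs \<in> fibre a m (Gpow (m + j))}" by blast
  qed (auto simp: fibre_def Gpow_def)
  then show ?case using Def_snoc[OF Suc.IH[OF Suc.prems]] by simp
qed

lemma def_fun_fibre:
  assumes f: "def_fun Def n C f" and C: "C \<subseteq> Gpow n" and a: "length a = m" and "m \<le> n"
  shows "def_fun Def n (fibre a m C) f"
proof -
  have "graph_over f (fibre a m C) = graph_over f C \<inter> fibre a m (Gpow (Suc n))"
    using C \<open>m \<le> n\<close> by (auto simp: fibre_def Gpow_def subset_iff)
  moreover have "fibre a m (Gpow (Suc n)) \<in> Def (Suc n)"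
    using fibre_Gpow_in_Def[OF a, of "Suc n - m"] \<open>m \<le> n\<close> by simp
  ultimately show ?thesis
    using Def_Int f unfolding def_fun_def by simp
qed

lemma point_cell:
  "cellD Def (length a) 0 {a} \<and> \<not> exceptional Def (length a) {a} \<and> cell_weight Def (length a) {a} = 1"
proof (induction a rule: rev_induct)
  case Nil
  have "\<not> exceptional Def 0 {[]}" by (simp add: exceptional_iff_at)
  then show ?case using cellD.base cell_weight_Nil by simp
next
  case (snoc t a)
  have c: "cellD Def (length a) 0 {a}" using snoc.IH by blast
  have eq: "{a @ [t]} = graph_over (\<lambda>_. t) {a}" by auto
  have df: "def_fun Def (length a) {a} (\<lambda>_. t)"
    unfolding def_fun_def eq[symmetric] using singleton_in_Def[of "a @ [t]"] by simp
  have ct: "cont_on_G (length a) {a} (\<lambda>_. t)" unfolding cont_on_G_def by auto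
  have "cellD Def (Suc (length a)) 0 (graph_over (\<lambda>_. t) {a})" using cellD.graph[OF c df ct] .
  moreover have "\<not> exceptional Def (Suc (length a)) (graph_over (\<lambda>_. t) {a})"
    using exceptional_graph_over[OF c] snoc.IH by simp
  moreover have "cell_weight Def (Suc (length a)) (graph_over (\<lambda>_. t) {a}) = 1"
    using cell_weight_graph_over[OF c df ct] snoc.IH by simp
  ultimately show ?case unfolding eq by simp
qed

lemma has_fibre_weight_base:
  assumes "cellD Def m d C"
  shows "has_fibre_weight Def m m C 1"
proof -
  have CG: "C \<subseteq> Gpow m" using cellD_subset_Gpow[OF assms] .
  have "is_cell Def m (fibre a m C) \<and> \<not> exceptional Def m (fibre a m C) \<and> cell_weight Def m (fibre a m C) = 1"
    if "a \<in> C" for a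
  proof -
    have "fibre a m C = {a}" "length a = m" using that CG by (auto simp: fibre_def Gpow_def)
    then show ?thesis using point_cell[of a] by (auto simp: is_cell_def)
  qed
  then show ?thesis unfolding has_fibre_weight_def proj_eq_self[OF CG] by simp
qed

lemma has_fibre_weight_graph_over:
  assumes B: "cellD Def n d B" and f: "def_fun Def n B f" "cont_on_G n B f" and "m \<le> n"
    and w: "has_fibre_weight Def m n B w"
  shows "has_fibre_weight Def m (Suc n) (graph_over f B) w"
proof -
  have BG: "B \<subseteq> Gpow n" using cellD_subset_Gpow[OF B] .
  have "is_cell Def (Suc n) (fibre a m (graph_over f B)) \<and> \<not> exceptional Def (Suc n) (fibre a m (graph_over f B)) \<and>
      cell_weight Def (Suc n) (fibre a m (graph_over f B)) = w" if a: "a \<in> proj m B" for a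
  proof -
    obtain d' where F: "cellD Def n d' (fibre a m B)"
      and F_props: "\<not> exceptional Def n (fibre a m B)" "cell_weight Def n (fibre a m B) = w"
      using w a unfolding has_fibre_weight_def is_cell_def by blast
    have la: "length a = m" using length_proj[OF BG \<open>m \<le> n\<close> a] .
    have df: "def_fun Def n (fibre a m B) f" using def_fun_fibre[OF f(1) BG la \<open>m \<le> n\<close>] .
    have ct: "cont_on_G n (fibre a m B) f" using cont_on_G_subset[OF f(2) fibre_subset] .
    show ?thesis
      unfolding fibre_graph_over[OF BG \<open>m \<le> n\<close>]
      using cellD.graph[OF F df ct] exceptional_graph_over[OF F] cell_weight_graph_over[OF F df ct] F_props
      by (auto simp: is_cell_def)
  qed
  moreover have "cell_weight Def (Suc n) (graph_over f B) = cell_weight Def m (proj m B) * w"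
    using cell_weight_graph_over[OF B f] w unfolding has_fibre_weight_def by simp
  moreover have "proj m (graph_over f B) = proj m B"
    using proj_proj[OF \<open>m \<le> n\<close>, of "graph_over f B"] by (simp add: proj_graph_over[OF BG])
  ultimately show ?thesis unfolding has_fibre_weight_def by simp
qed

lemma has_fibre_weight_band_over:
  fixes lo hi :: "('g list \<Rightarrow> 'g) option"
  assumes B: "cellD Def n d B"
    and lo: "\<forall>f\<in>set_option lo. def_fun Def n B f \<and> cont_on_G n B f"
    and hi: "\<forall>g\<in>set_option hi. def_fun Def n B g \<and> cont_on_G n B g"
    and ordered: "bounds_ordered lo hi B" and bounded: "\<not> (lo = None \<and> hi = None)"
    and "m \<le> n" and w: "has_fibre_weight Def m n B w"
  shows "has_fibre_weight Def m (Suc n) (band_over lo hi B) (w * band_weight lo hi)"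
proof -
  have BG: "B \<subseteq> Gpow n" using cellD_subset_Gpow[OF B] .
  have "is_cell Def (Suc n) (fibre a m (band_over lo hi B)) \<and> \<not> exceptional Def (Suc n) (fibre a m (band_over lo hi B)) \<and>
      cell_weight Def (Suc n) (fibre a m (band_over lo hi B)) = w * band_weight lo hi" if a: "a \<in> proj m B" for a
  proof -
    obtain d' where F: "cellD Def n d' (fibre a m B)"
      and F_props: "\<not> exceptional Def n (fibre a m B)" "cell_weight Def n (fibre a m B) = w"
      using w a unfolding has_fibre_weight_def is_cell_def by blast
    have la: "length a = m" using length_proj[OF BG \<open>m \<le> n\<close> a] .
    have regular: "def_fun Def n (fibre a m B) f \<and> cont_on_G n (fibre a m B) f"
      if "def_fun Def n B f \<and> cont_on_G n B f" for f
      using that def_fun_fibre[OF _ BG la \<open>m \<le> n\<close>] cont_on_G_subset[OF _ fibre_subset] by blast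
    have lo': "\<forall>f\<in>set_option lo. def_fun Def n (fibre a m B) f \<and> cont_on_G n (fibre a m B) f"
      using lo regular by blast
    have hi': "\<forall>g\<in>set_option hi. def_fun Def n (fibre a m B) g \<and> cont_on_G n (fibre a m B) g"
      using hi regular by blast
    have ordered': "bounds_ordered lo hi (fibre a m B)" using ordered fibre_subset by blast
    show ?thesis
      unfolding fibre_band_over[OF BG \<open>m \<le> n\<close>]
      using cellD.band[OF F lo' hi' ordered'] exceptional_band_over[OF F ordered']
        cell_weight_band_over[OF F lo' hi' ordered' bounded] F_props bounded
      by (auto simp: is_cell_def)
  qed
  moreover have "cell_weight Def (Suc n) (band_over lo hi B) = cell_weight Def m (proj m B) * (w * band_weight lo hi)"
    using cell_weight_band_over[OF B lo hi ordered bounded] w unfolding has_fibre_weight_def by simp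
  moreover have "proj m (band_over lo hi B) = proj m B"
    using proj_proj[OF \<open>m \<le> n\<close>, of "band_over lo hi B"] by (simp add: proj_band_over[OF BG ordered])
  ultimately show ?thesis unfolding has_fibre_weight_def by simp
qed

lemma cell_has_fibre_weight:
  assumes "cellD Def (m + j) d C" "\<not> exceptional Def (m + j) C"
  shows "\<exists>w. has_fibre_weight Def m (m + j) C w"
  using assms
proof (induction j arbitrary: d C)
  case 0
  then show ?case using has_fibre_weight_base by auto
next
  case (Suc j)
  have nexc: "\<not> exceptional Def (Suc (m + j)) C" using Suc.prems(2) by simp
  from Suc.prems(1)[unfolded add_Suc_right] have "\<exists>w. has_fibre_weight Def m (Suc (m + j)) C w"
  proof (cases rule: cellD_SucE)
    case (graph B f)
    then have "\<not> exceptional Def (m + j) B" using nexc exceptional_graph_over by simp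
    then obtain w where "has_fibre_weight Def m (m + j) B w" using Suc.IH graph(1) by blast
    then show ?thesis using has_fibre_weight_graph_over[OF graph(1-3) le_add1] graph(4) by auto
  next
    case (band dB B lo hi)
    then have "\<not> exceptional Def (m + j) B" "\<not> (lo = None \<and> hi = None)"
      using nexc exceptional_band_over[OF band(1,5)] by simp_all
    moreover obtain w where "has_fibre_weight Def m (m + j) B w" using Suc.IH band(1) calculation(1) by blast
    ultimately show ?thesis using has_fibre_weight_band_over[OF band(1,3-5) _ le_add1] band(6) by auto
  qed
  then show ?case by simp
qed

end

section \<open>Cell decompositions\<close>

lemma cell_decompD:
  assumes "cell_decomp Def n D"
  shows "finite D" "\<Union>D = Gpow n" "\<forall>C\<in>D. \<forall>C'\<in>D. C \<noteq> C' \<longrightarrow> C \<inter> C' = {}"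
    "\<forall>C\<in>D. is_cell Def n C"
  using assms by (cases n; auto simp: Gpow_def is_cell_def intro: cellD.base)+

lemma cell_decomp_proj: "cell_decomp Def (m + n) D \<Longrightarrow> cell_decomp Def m (proj m ` D)"
proof (induction n arbitrary: D)
  case 0
  then have "proj m ` D = D"
    using cell_decompD(4)[OF 0[simplified]] proj_eq_self cellD_subset_Gpow
    unfolding is_cell_def by (metis (no_types, lifting) image_cong image_ident)
  with 0 show ?case by simp
next
  case (Suc n)
  then have "cell_decomp Def m (proj m ` proj (m + n) ` D)" by simp
  moreover have "proj m ` proj (m + n) ` D = proj m ` D" by (simp add: image_image proj_proj)
  ultimately show ?case by simp
qed

lemma nonexc_partition_preimage:
  assumes D: "cell_decomp Def (m + n) D" and X: "X \<subseteq> Gpow (m + n)"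
    and compatible: "\<forall>C\<in>D. C \<subseteq> X \<or> C \<inter> X = {}"
    and nexc: "\<forall>C\<in>D. \<not> exceptional Def (m + n) C" and A: "A \<in> proj m ` D"
  shows "nonexc_partition Def (m + n) {xs \<in> X. take m xs \<in> A} {C \<in> D. C \<subseteq> X \<and> proj m C = A}"
  unfolding nonexc_partition_def
proof (intro conjI)
  show "\<Union>{C \<in> D. C \<subseteq> X \<and> proj m C = A} = {xs \<in> X. take m xs \<in> A}"
  proof (intro set_eqI iffI)
    fix xs assume xs: "xs \<in> {xs \<in> X. take m xs \<in> A}"
    then obtain C where C: "C \<in> D" "xs \<in> C" using X cell_decompD(2)[OF D] by blast
    then have "take m xs \<in> proj m C \<inter> A" using xs unfolding proj_def by blast
    then have "proj m C = A"
      using cell_decompD(3)[OF cell_decomp_proj[OF D]] A C(1) by blast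
    with C xs compatible show "xs \<in> \<Union>{C \<in> D. C \<subseteq> X \<and> proj m C = A}" by blast
  qed (auto simp: proj_def)
qed (use cell_decompD[OF D] nexc in auto)

theorem proposition4p6:
  fixes Def :: "nat \<Rightarrow> ('g::linordered_ab_group_add) list set set"
    and m n :: nat and X :: "'g list set" and D :: "'g list set set"
  assumes "omin_group_expansion Def"
    and "X \<in> Def (m + n)"
    and "cell_decomp Def (m + n) D"
    and "\<forall>C\<in>D. C \<subseteq> X \<or> C \<inter> X = {}"
    and "\<forall>C\<in>D. \<not> exceptional Def (m + n) C"
    and "\<forall>A\<in>proj m ` D. \<not> exceptional Def m A"
  shows "\<forall>A\<in>proj m ` D. \<exists>e::int.
           (\<forall>a\<in>A. chi_b Def (m + n) {xs \<in> X. take m xs = a} = e) \<and>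
           chi_b Def (m + n) {xs \<in> X. take m xs \<in> A} = chi_b Def m A * e"
proof
  interpret omin_structure Def by (rule omin_structure.intro) (rule assms(1))
  fix A assume A: "A \<in> proj m ` D"
  define F where "F = {C \<in> D. C \<subseteq> X \<and> proj m C = A}"
  have part: "nonexc_partition Def (m + n) {xs \<in> X. take m xs \<in> A} F"
    unfolding F_def using nonexc_partition_preimage[OF assms(3) Def_subset_Gpow[OF assms(2)] assms(4,5) A] .
  have over: "\<And>C. C \<in> F \<Longrightarrow> proj m C = A" unfolding F_def by blast
  have "\<exists>w. \<forall>C\<in>F. has_fibre_weight Def m (m + n) C (w C)"
    using cell_has_fibre_weight cell_decompD(4)[OF assms(3)] assms(5)
    unfolding F_def is_cell_def by (intro bchoice) blast
  then obtain w where w: "\<And>C. C \<in> F \<Longrightarrow> has_fibre_weight Def m (m + n) C (w C)" by blast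
  have "is_cell Def m A" "\<not> exceptional Def m A"
    using A assms(6) cell_decompD(4)[OF cell_decomp_proj[OF assms(3)]] by blast+
  note chi = chi_b_over_cell[OF part over w this]
  have "{xs \<in> X. take m xs = a} = fibre a m {xs \<in> X. take m xs \<in> A}" if "a \<in> A" for a
    using that by (auto simp: fibre_def)
  with chi show "\<exists>e. (\<forall>a\<in>A. chi_b Def (m + n) {xs \<in> X. take m xs = a} = e) \<and>
      chi_b Def (m + n) {xs \<in> X. take m xs \<in> A} = chi_b Def m A * e"
    by (intro exI[of _ "\<Sum>C\<in>F. w C"]) simp
qed

end
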